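(* Let $\lambda_1,\lambda_2\ge0$ with $\lambda_1+\lambda_2(p-1)>0$, and let $w_i=\lambda_1+\lambda_2(p-i)$ for $i=1,\dots,p$ (the OSCAR weights). Let $\mathbf A\in\mathbb R^{n\times p}$ have columns with $\mathbf 1^T\mathbf a_k=0$ and $\|\mathbf a_k\|_2=1$ for all $k$, let $\rho_{ij}=\mathbf a_i^T\mathbf a_j$, and let $\mathbf y\in\mathbb R^n$. Let $\widehat{\mathbf x}$ be any minimizer of $\frac12\|\mathbf A\mathbf x-\mathbf y\|_2^2+\sum_{i=1}^p w_i|x|_{[i]}$ over $\mathbf x\in\mathbb R^p$. Then for every pair $(i,j)$ with $\|\mathbf y\|_2\sqrt{2-2\rho_{ij}\operatorname{sign}(\widehat x_i\widehat x_j)}<\lambda_2$, we have $|\widehat x_i|=|\widehat x_j|$.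
   Context: $|x|_{[i]}$ denotes the $i$-th largest component of $\mathbf x$ in magnitude; $\mathbf a_k$ is the $k$-th column of $\mathbf A$; $\mathbf 1$ is the all-ones vector; $\operatorname{sign}$ denotes the sign function. *)

theory Defs
  imports Complex_Main
begin

text \<open>Vectors in R^p are functions nat => real, only indices k < p matter.
  Matrices in R^(n x p) are functions nat => nat => real, entry (r,k) with r < n, k < p.\<close>

definition sorted_abs :: "nat \<Rightarrow> (nat \<Rightarrow> real) \<Rightarrow> nat \<Rightarrow> real" where
  "sorted_abs p x i = rev (sort (map (\<lambda>k. \<bar>x k\<bar>) [0..<p])) ! (i - 1)"

definition oscar_weight :: "real \<Rightarrow> real \<Rightarrow> nat \<Rightarrow> nat \<Rightarrow> real" where
  "oscar_weight l1 l2 p i = l1 + l2 * (real p - real i)"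

definition oscar_obj ::
  "nat \<Rightarrow> nat \<Rightarrow> (nat \<Rightarrow> nat \<Rightarrow> real) \<Rightarrow> (nat \<Rightarrow> real) \<Rightarrow> real \<Rightarrow> real \<Rightarrow> (nat \<Rightarrow> real) \<Rightarrow> real" where
  "oscar_obj n p A y l1 l2 x =
     1/2 * (\<Sum>r<n. ((\<Sum>k<p. A r k * x k) - y r)^2)
     + (\<Sum>i=1..p. oscar_weight l1 l2 p i * sorted_abs p x i)"

end

theory Submission imports Defs "HOL-Library.Multiset" "HOL-Analysis.Convex" begin

text \<open>The OSCAR penalty equals \<open>\<lambda>\<^sub>1 \<Sum>\<^sub>k |x\<^sub>k| + \<lambda>\<^sub>2 \<Sum>\<^sub>k\<^sub><\<^sub>l max |x\<^sub>k| |x\<^sub>l|\<close>.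
  Suppose \<open>|x\<^sub>i| > |x\<^sub>j|\<close> at a minimizer. Moving \<open>|x\<^sub>i|\<close> down by \<open>t\<close> and
  \<open>|x\<^sub>j|\<close> up by \<open>t\<close> (keeping signs) lowers the pairwise-max term by at least \<open>t\<close>, so
  the penalty drops by at least \<open>\<lambda>\<^sub>2 t\<close>. The residual \<open>e\<close> moves along
  \<open>d = -sign(x\<^sub>i) a\<^sub>i + sign(x\<^sub>j) a\<^sub>j\<close>, so the loss grows by at most
  \<open>t \<parallel>e\<parallel> \<parallel>d\<parallel> + t\<^sup>2 \<parallel>d\<parallel>\<^sup>2/2\<close>. Comparing with \<open>x = 0\<close> gives \<open>\<parallel>e\<parallel> \<le> \<parallel>y\<parallel>\<close>, and
  \<open>\<parallel>d\<parallel>\<^sup>2 \<le> 2 - 2\<rho>\<^sub>i\<^sub>j sign(x\<^sub>i x\<^sub>j)\<close>; for small \<open>t\<close> the hypothesis makes the total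
  change negative.\<close>

fun sum_pair_max :: "real list \<Rightarrow> real" where
  "sum_pair_max [] = 0"
| "sum_pair_max (a # xs) = sum_list (map (max a) xs) + sum_pair_max xs"

lemma sum_pair_max_mset:
  "2 * sum_pair_max xs + sum_list xs = (\<Sum>a\<in>#mset xs. \<Sum>b\<in>#mset xs. max a b)"
proof (induction xs)
  case Nil
  then show ?case by simp
next
  case (Cons a xs)
  have row: "sum_list (map (max a) xs) = (\<Sum>b\<in>#mset xs. max a b)"
    by (simp flip: sum_mset_sum_list)
  have col: "(\<Sum>c\<in>#mset xs. max c a) = (\<Sum>b\<in>#mset xs. max a b)"
    by (simp add: max.commute)
  have "(\<Sum>c\<in>#mset (a # xs). \<Sum>b\<in>#mset (a # xs). max c b)
      = a + 2 * (\<Sum>b\<in>#mset xs. max a b) + (\<Sum>c\<in>#mset xs. \<Sum>b\<in>#mset xs. max c b)"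
    by (simp add: sum_mset.distrib col)
  then show ?case using Cons row by simp
qed

lemma sum_pair_max_perm: "mset xs = mset ys \<Longrightarrow> sum_pair_max xs = sum_pair_max ys"
  using sum_pair_max_mset[of xs] sum_pair_max_mset[of ys]
  by (metis sum_mset_sum_list add_right_cancel mult_left_cancel zero_neq_numeral)

lemma sum_pair_max_nonneg: "(\<And>z. z \<in> set xs \<Longrightarrow> 0 \<le> z) \<Longrightarrow> 0 \<le> sum_pair_max xs"
proof (induction xs)
  case Nil
  then show ?case by simp
next
  case (Cons a xs)
  have "0 \<le> sum_list (map (max a) xs)"
    by (rule sum_list_nonneg) (use Cons.prems in \<open>auto simp: max_def\<close>)
  with Cons show ?case by simp
qed

lemma sum_pair_max_zeros: "sum_pair_max (map (\<lambda>_. 0) xs) = 0"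
  by (induction xs) (simp_all add: sum_list_triv o_def)

text \<open>On a non-increasing list the \<open>k\<close>-th entry is the maximum of its pairs with the
  \<open>length s - 1 - k\<close> later entries, which is where the linearly decreasing weights come from.\<close>
lemma linear_weighted_sum_sorted_desc:
  assumes "sorted_wrt (\<ge>) s"
  shows "(\<Sum>k<length s. (l1 + l2 * (real (length s) - 1 - real k)) * s ! k)
       = l1 * sum_list s + l2 * sum_pair_max s"
  using assms
proof (induction s)
  case Nil
  then show ?case by simp
next
  case (Cons a s)
  have "map (max a) s = map (\<lambda>_. a) s" using Cons.prems by (auto simp: max_def)
  then have pairs: "sum_list (map (max a) s) = real (length s) * a"
    by (simp only: sum_list_triv)
  have "(\<Sum>k<length (a # s). (l1 + l2 * (real (length (a # s)) - 1 - real k)) * (a # s) ! k)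
      = (l1 + l2 * real (length s)) * a
        + (\<Sum>k<length s. (l1 + l2 * (real (length s) - 1 - real k)) * s ! k)"
    by (simp add: sum.lessThan_Suc_shift algebra_simps del: sum.lessThan_Suc)
  then show ?case using Cons pairs by (simp add: algebra_simps)
qed

definition oscar_penalty :: "nat \<Rightarrow> real \<Rightarrow> real \<Rightarrow> (nat \<Rightarrow> real) \<Rightarrow> real" where
  "oscar_penalty p l1 l2 x = (\<Sum>i=1..p. oscar_weight l1 l2 p i * sorted_abs p x i)"

definition residual :: "nat \<Rightarrow> (nat \<Rightarrow> nat \<Rightarrow> real) \<Rightarrow> (nat \<Rightarrow> real) \<Rightarrow> (nat \<Rightarrow> real) \<Rightarrow> nat \<Rightarrow> real"
  where "residual p A y x r = (\<Sum>k<p. A r k * x k) - y r"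

lemma oscar_obj_eq:
  "oscar_obj n p A y l1 l2 x = 1/2 * (\<Sum>r<n. (residual p A y x r)^2) + oscar_penalty p l1 l2 x"
  by (simp add: oscar_obj_def oscar_penalty_def residual_def)

lemma oscar_penalty_pairwise:
  "oscar_penalty p l1 l2 x
   = l1 * sum_list (map (\<lambda>k. \<bar>x k\<bar>) [0..<p]) + l2 * sum_pair_max (map (\<lambda>k. \<bar>x k\<bar>) [0..<p])"
proof -
  define L where "L = map (\<lambda>k. \<bar>x k\<bar>) [0..<p]"
  define s where "s = rev (sort L)"
  have "{1..p} = Suc ` {..<p}" by (simp add: image_Suc_lessThan)
  then have "oscar_penalty p l1 l2 x = (\<Sum>k<p. oscar_weight l1 l2 p (Suc k) * sorted_abs p x (Suc k))"
    by (simp add: oscar_penalty_def sum.reindex)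
  also have "\<dots> = (\<Sum>k<length s. (l1 + l2 * (real (length s) - 1 - real k)) * s ! k)"
    by (simp add: oscar_weight_def sorted_abs_def s_def L_def algebra_simps)
  also have "\<dots> = l1 * sum_list s + l2 * sum_pair_max s"
    by (rule linear_weighted_sum_sorted_desc) (simp add: s_def sorted_wrt_rev)
  also have "\<dots> = l1 * sum_list L + l2 * sum_pair_max L"
    using sum_pair_max_perm[of s L] by (simp add: s_def flip: sum_mset_sum_list)
  finally show ?thesis by (simp add: L_def)
qed

lemma oscar_penalty_nonneg: "l1 \<ge> 0 \<Longrightarrow> l2 \<ge> 0 \<Longrightarrow> oscar_penalty p l1 l2 x \<ge> 0"
  unfolding oscar_penalty_pairwise
  by (intro add_nonneg_nonneg mult_nonneg_nonneg sum_list_nonneg sum_pair_max_nonneg) auto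

lemma oscar_penalty_zero: "oscar_penalty p l1 l2 (\<lambda>_. 0) = 0"
  unfolding oscar_penalty_pairwise by (simp add: sum_pair_max_zeros sum_list_triv)

lemma oscar_penalty_split_pair:
  fixes x :: "nat \<Rightarrow> real"
  assumes "i < p" "j < p" "i \<noteq> j"
  defines "R \<equiv> map (\<lambda>k. \<bar>x k\<bar>) (filter (\<lambda>k. k \<noteq> i \<and> k \<noteq> j) [0..<p])"
  shows "oscar_penalty p l1 l2 x
       = l1 * (\<bar>x i\<bar> + \<bar>x j\<bar> + sum_list R)
         + l2 * (max (\<bar>x i\<bar>) (\<bar>x j\<bar>) + sum_list (map (\<lambda>c. max (\<bar>x i\<bar>) c + max (\<bar>x j\<bar>) c) R)
                 + sum_pair_max R)"
proof -
  have "mset [0..<p] = mset (i # j # filter (\<lambda>k. k \<noteq> i \<and> k \<noteq> j) [0..<p])"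
    by (rule set_eq_iff_mset_eq_distinct[THEN iffD1]) (use assms in auto)
  then have perm: "mset (map (\<lambda>k. \<bar>x k\<bar>) [0..<p]) = mset (\<bar>x i\<bar> # \<bar>x j\<bar> # R)"
    unfolding R_def by (metis list.simps(9) mset_map)
  then have "sum_list (map (\<lambda>k. \<bar>x k\<bar>) [0..<p]) = sum_list (\<bar>x i\<bar> # \<bar>x j\<bar> # R)"
    by (metis sum_mset_sum_list)
  then show ?thesis
    unfolding oscar_penalty_pairwise sum_pair_max_perm[OF perm]
    by (simp add: sum_list_addf algebra_simps o_def)
qed

text \<open>Only the pair term \<open>max |x\<^sub>i| |x\<^sub>j|\<close> shrinks by \<open>t\<close>; the terms pairing
  \<open>i\<close> or \<open>j\<close> with any other index do not grow.\<close>
lemma oscar_penalty_pull_together: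
  assumes "i < p" "j < p" "i \<noteq> j" and "l1 \<ge> 0" "l2 \<ge> 0" "t \<ge> 0"
    and rest: "\<And>k. k \<noteq> i \<Longrightarrow> k \<noteq> j \<Longrightarrow> x' k = x k"
    and down: "\<bar>x' i\<bar> = \<bar>x i\<bar> - t"
    and up: "\<bar>x' j\<bar> \<le> \<bar>x j\<bar> + t" "\<bar>x' j\<bar> \<le> \<bar>x' i\<bar>"
  shows "oscar_penalty p l1 l2 x' + l2 * t \<le> oscar_penalty p l1 l2 x"
proof -
  define R where "R = map (\<lambda>k. \<bar>x k\<bar>) (filter (\<lambda>k. k \<noteq> i \<and> k \<noteq> j) [0..<p])"
  have R': "map (\<lambda>k. \<bar>x' k\<bar>) (filter (\<lambda>k. k \<noteq> i \<and> k \<noteq> j) [0..<p]) = R"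
    using rest by (simp add: R_def)
  define pair where
    "pair u v = max u v + sum_list (map (\<lambda>c. max u c + max v c) R) + sum_pair_max R" for u v
  have "sum_list (map (\<lambda>c. max (\<bar>x' i\<bar>) c + max (\<bar>x' j\<bar>) c) R)
      \<le> sum_list (map (\<lambda>c. max (\<bar>x i\<bar>) c + max (\<bar>x j\<bar>) c) R)"
    by (rule sum_list_mono) (use down up \<open>t \<ge> 0\<close> in \<open>auto simp: max_def\<close>)
  moreover have "max (\<bar>x' i\<bar>) (\<bar>x' j\<bar>) + t \<le> max (\<bar>x i\<bar>) (\<bar>x j\<bar>)"
    using down up by (simp add: max_absorb1)
  ultimately have "pair (\<bar>x' i\<bar>) (\<bar>x' j\<bar>) + t \<le> pair (\<bar>x i\<bar>) (\<bar>x j\<bar>)"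
    by (simp add: pair_def)
  then have "l2 * pair (\<bar>x' i\<bar>) (\<bar>x' j\<bar>) + l2 * t \<le> l2 * pair (\<bar>x i\<bar>) (\<bar>x j\<bar>)"
    using \<open>l2 \<ge> 0\<close> by (metis distrib_left mult_left_mono)
  moreover have "l1 * (\<bar>x' i\<bar> + \<bar>x' j\<bar> + sum_list R) \<le> l1 * (\<bar>x i\<bar> + \<bar>x j\<bar> + sum_list R)"
    using down up \<open>l1 \<ge> 0\<close> by (intro mult_left_mono) auto
  moreover note oscar_penalty_split_pair[OF assms(1-3), of l1 l2 x, folded R_def, folded pair_def]
    and oscar_penalty_split_pair[OF assms(1-3), of l1 l2 x', unfolded R', folded pair_def]
  ultimately show ?thesis by linarith
qed

lemma sum_mult_fun_upd2:
  fixes a x :: "nat \<Rightarrow> real"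
  assumes "i < p" "j < p" "i \<noteq> j"
  shows "(\<Sum>k<p. a k * (x(i := x i + u, j := x j + v)) k) = (\<Sum>k<p. a k * x k) + u * a i + v * a j"
proof -
  have "(\<Sum>k<p. a k * (x(i := x i + u, j := x j + v)) k)
      = (\<Sum>k<p. a k * x k + ((if k = i then u * a i else 0) + (if k = j then v * a j else 0)))"
    using assms(3) by (intro sum.cong) (auto simp: algebra_simps)
  then show ?thesis using assms(1,2) by (simp add: sum.distrib algebra_simps)
qed

lemma abs_shrink_sgn:
  fixes a t :: real
  assumes "0 \<le> t" "t \<le> \<bar>a\<bar>"
  shows "\<bar>a - t * sgn a\<bar> = \<bar>a\<bar> - t"
  using assms by (auto simp: sgn_if abs_if)

lemma abs_grow_sgn_le:
  fixes b t :: real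
  assumes "0 \<le> t"
  shows "\<bar>b + t * sgn b\<bar> \<le> \<bar>b\<bar> + t"
  using assms by (auto simp: sgn_if abs_if)

lemma sum_mult_le_sqrt_sum_squares:
  fixes a b :: "'a \<Rightarrow> real"
  shows "(\<Sum>r\<in>I. a r * b r) \<le> sqrt (\<Sum>r\<in>I. (a r)^2) * sqrt (\<Sum>r\<in>I. (b r)^2)"
proof -
  have "(\<Sum>r\<in>I. a r * b r) \<le> sqrt ((\<Sum>r\<in>I. a r * b r)^2)" by simp
  also have "\<dots> \<le> sqrt ((\<Sum>r\<in>I. (a r)^2) * (\<Sum>r\<in>I. (b r)^2))"
    by (rule real_sqrt_le_mono) (rule Cauchy_Schwarz_ineq_sum)
  finally show ?thesis by (simp add: real_sqrt_mult)
qed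

lemma no_small_step_balance:
  fixes l c E \<tau> :: real
  assumes "c < l" "0 \<le> E" "0 < \<tau>"
    and step: "\<And>t. 0 < t \<Longrightarrow> t \<le> \<tau> \<Longrightarrow> l * t \<le> c * t + E * t^2 / 2"
  shows False
proof -
  define t where "t = min \<tau> ((l - c) / (E + 1))"
  have t: "0 < t" "t \<le> \<tau>" using assms by (auto simp: t_def)
  have "t \<le> (l - c) / (E + 1)" by (simp add: t_def)
  then have "t * (E + 1) \<le> l - c" using \<open>0 \<le> E\<close> by (simp add: pos_le_divide_eq)
  then have small: "t * E < l - c" using t by (simp add: algebra_simps)
  have "t * l \<le> t * (c + E * t / 2)"
    using step[OF t] by (simp add: power2_eq_square algebra_simps)
  then have "l \<le> c + E * t / 2" using t by simp
  moreover have "E * t / 2 \<le> t * E" using t \<open>0 \<le> E\<close> by simp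
  ultimately show False using small by linarith
qed

lemma sum_sq_signed_unit_diff_le:
  fixes a b :: "nat \<Rightarrow> real" and u v :: real
  assumes "(\<Sum>r<n. (a r)^2) = 1" "(\<Sum>r<n. (b r)^2) = 1" "u \<noteq> 0"
  shows "(\<Sum>r<n. (- sgn u * a r + sgn v * b r)^2) \<le> 2 - 2 * (\<Sum>r<n. a r * b r) * sgn (u * v)"
proof -
  have "(\<Sum>r<n. (- sgn u * a r + sgn v * b r)^2)
      = sgn u ^ 2 * (\<Sum>r<n. (a r)^2) + sgn v ^ 2 * (\<Sum>r<n. (b r)^2)
        - 2 * (sgn u * sgn v) * (\<Sum>r<n. a r * b r)"
    by (simp add: power2_eq_square algebra_simps sum.distrib sum_distrib_left sum_subtractf)
  also have "\<dots> = 1 + sgn v ^ 2 - 2 * (\<Sum>r<n. a r * b r) * sgn (u * v)"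
    using assms by (simp add: sgn_mult power2_eq_square)
  also have "\<dots> \<le> 2 - 2 * (\<Sum>r<n. a r * b r) * sgn (u * v)"
    by (simp add: sgn_if)
  finally show ?thesis .
qed

lemma oscar_minimizer_residual_le:
  assumes "l1 \<ge> 0" "l2 \<ge> 0"
    and opt: "oscar_obj n p A y l1 l2 xh \<le> oscar_obj n p A y l1 l2 (\<lambda>_. 0)"
  shows "(\<Sum>r<n. (residual p A y xh r)^2) \<le> (\<Sum>r<n. (y r)^2)"
  using opt oscar_penalty_nonneg[OF assms(1,2), of p xh]
  by (simp add: oscar_obj_eq oscar_penalty_zero residual_def)

lemma oscar_obj_pull_together:
  fixes A :: "nat \<Rightarrow> nat \<Rightarrow> real" and y x :: "nat \<Rightarrow> real"
  assumes ip: "i < p" and jp: "j < p" and ij: "i \<noteq> j" and l1: "l1 \<ge> 0" and l2: "l2 \<ge> 0"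
    and t: "0 \<le> t" "t \<le> (\<bar>x i\<bar> - \<bar>x j\<bar>) / 2"
  defines "x' \<equiv> x(i := x i - t * sgn (x i), j := x j + t * sgn (x j))"
    and "d \<equiv> \<lambda>r. - sgn (x i) * A r i + sgn (x j) * A r j"
  shows "oscar_obj n p A y l1 l2 x' + l2 * t
       \<le> oscar_obj n p A y l1 l2 x + t * (\<Sum>r<n. residual p A y x r * d r) + (\<Sum>r<n. (d r)^2) * t^2 / 2"
proof -
  have "residual p A y x' r = residual p A y x r + t * d r" for r
    using sum_mult_fun_upd2[OF ip jp ij, of "A r" x "- t * sgn (x i)" "t * sgn (x j)"]
    by (simp add: residual_def x'_def d_def algebra_simps)
  then have loss: "(\<Sum>r<n. (residual p A y x' r)^2)
      = (\<Sum>r<n. (residual p A y x r)^2) + 2 * t * (\<Sum>r<n. residual p A y x r * d r)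
        + t^2 * (\<Sum>r<n. (d r)^2)"
    by (simp add: power2_eq_square algebra_simps sum.distrib sum_distrib_left)
  have "\<bar>x' i\<bar> = \<bar>x i\<bar> - t"
    using abs_shrink_sgn[of t "x i"] t ij by (simp add: x'_def)
  moreover have "\<bar>x' j\<bar> \<le> \<bar>x j\<bar> + t"
    using abs_grow_sgn_le[of t "x j"] t by (simp add: x'_def)
  ultimately have "oscar_penalty p l1 l2 x' + l2 * t \<le> oscar_penalty p l1 l2 x"
    using t by (intro oscar_penalty_pull_together[OF ip jp ij l1 l2]) (auto simp: x'_def)
  then show ?thesis
    unfolding oscar_obj_eq loss by (simp add: algebra_simps)
qed

lemma oscar_minimizer_abs_le:
  fixes A :: "nat \<Rightarrow> nat \<Rightarrow> real" and y xh :: "nat \<Rightarrow> real"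
  assumes l1: "l1 \<ge> 0" and l2: "l2 \<ge> 0"
    and unit: "\<And>k. k < p \<Longrightarrow> sqrt (\<Sum>r<n. (A r k)^2) = 1"
    and opt: "\<And>x. oscar_obj n p A y l1 l2 xh \<le> oscar_obj n p A y l1 l2 x"
    and ip: "i < p" and jp: "j < p"
    and close: "sqrt (\<Sum>r<n. (y r)^2) * sqrt (2 - 2 * (\<Sum>r<n. A r i * A r j) * sgn (xh i * xh j)) < l2"
  shows "\<bar>xh i\<bar> \<le> \<bar>xh j\<bar>"
proof (rule ccontr)
  assume "\<not> \<bar>xh i\<bar> \<le> \<bar>xh j\<bar>"
  then have gap: "\<bar>xh j\<bar> < \<bar>xh i\<bar>" by simp
  then have ij: "i \<noteq> j" by auto
  define D where "D = 2 - 2 * (\<Sum>r<n. A r i * A r j) * sgn (xh i * xh j)"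
  define c where "c = sqrt (\<Sum>r<n. (y r)^2) * sqrt D"
  define d where "d r = - sgn (xh i) * A r i + sgn (xh j) * A r j" for r
  define E where "E = (\<Sum>r<n. (d r)^2)"
  have "0 \<le> E" by (simp add: E_def sum_nonneg)
  have "E \<le> D"
    unfolding E_def d_def D_def using unit[OF ip] unit[OF jp] gap
    by (intro sum_sq_signed_unit_diff_le) auto
  have first_order: "(\<Sum>r<n. residual p A y xh r * d r) \<le> c"
  proof -
    have "(\<Sum>r<n. residual p A y xh r * d r) \<le> sqrt (\<Sum>r<n. (residual p A y xh r)^2) * sqrt E"
      unfolding E_def by (rule sum_mult_le_sqrt_sum_squares)
    also have "\<dots> \<le> c"
      unfolding c_def using oscar_minimizer_residual_le[OF l1 l2 opt] \<open>E \<le> D\<close> \<open>0 \<le> E\<close>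
      by (intro mult_mono) (auto simp: sum_nonneg)
    finally show ?thesis .
  qed
  show False
  proof (rule no_small_step_balance)
    show "c < l2" using close by (simp add: c_def D_def)
    show "0 \<le> E" by fact
    show "0 < (\<bar>xh i\<bar> - \<bar>xh j\<bar>) / 2" using gap by simp
  next
    fix t :: real
    assume t: "0 < t" "t \<le> (\<bar>xh i\<bar> - \<bar>xh j\<bar>) / 2"
    have "oscar_obj n p A y l1 l2 xh + l2 * t
        \<le> oscar_obj n p A y l1 l2 xh + t * (\<Sum>r<n. residual p A y xh r * d r) + E * t^2 / 2"
      using opt oscar_obj_pull_together[OF ip jp ij l1 l2, of t xh n A y] t
      unfolding E_def d_def by (meson add_right_mono less_imp_le order_trans)
    also have "\<dots> \<le> oscar_obj n p A y l1 l2 xh + c * t + E * t^2 / 2"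
      using first_order t by (simp add: mult.commute mult_left_mono)
    finally show "l2 * t \<le> c * t + E * t^2 / 2" by simp
  qed
qed

theorem corollary2:
  fixes n p :: nat and A :: "nat \<Rightarrow> nat \<Rightarrow> real" and y xh :: "nat \<Rightarrow> real"
    and l1 l2 :: real
  assumes "l1 \<ge> 0" and "l2 \<ge> 0" and "l1 + l2 * (real p - 1) > 0"
    and "\<And>k. k < p \<Longrightarrow> (\<Sum>r<n. A r k) = 0"
    and "\<And>k. k < p \<Longrightarrow> sqrt (\<Sum>r<n. (A r k)^2) = 1"
    and "\<And>x. oscar_obj n p A y l1 l2 xh \<le> oscar_obj n p A y l1 l2 x"
    and "i < p" and "j < p"
    and "sqrt (\<Sum>r<n. (y r)^2) * sqrt (2 - 2 * (\<Sum>r<n. A r i * A r j) * sgn (xh i * xh j)) < l2"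
  shows "\<bar>xh i\<bar> = \<bar>xh j\<bar>"
proof (rule antisym)
  show "\<bar>xh i\<bar> \<le> \<bar>xh j\<bar>"
    by (rule oscar_minimizer_abs_le[OF assms(1,2,5,6,7,8,9)])
  have "sqrt (\<Sum>r<n. (y r)^2) * sqrt (2 - 2 * (\<Sum>r<n. A r j * A r i) * sgn (xh j * xh i)) < l2"
    using assms(9) by (simp add: mult.commute)
  from oscar_minimizer_abs_le[OF assms(1,2,5,6,8,7) this]
  show "\<bar>xh j\<bar> \<le> \<bar>xh i\<bar>" .
qed

end
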